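(* Let $d\ge 1$, $K\ge 2$. Let $\Sigma_X\in\mathbb{R}^{d\times d}$ be symmetric positive definite and $P\in\mathbb{R}^{K\times K}$ be symmetric positive definite. Let $\boldsymbol{x}\in\mathbb{R}^d$ with $\boldsymbol{x}\neq \boldsymbol{0}$, let $y\in\mathbb{R}$ and $\boldsymbol{\theta}\in\mathbb{R}^d$ with residual $r:=y-\boldsymbol{x}^\top\boldsymbol{\theta}\neq 0$. Let $\boldsymbol{\sigma}\in\mathbb{R}^K$ be a probability vector ($\sigma_k\ge 0$, $\sum_k\sigma_k=1$) and $\mathbf{e}_{c}\in\{0,1\}^K$ the one-hot vector of a class $c\in\{1,\dots,K\}$, with $\boldsymbol{\sigma}\neq\mathbf{e}_c$. Define $$\mathrm{IF}_{\mathrm{MSE}}=\Sigma_X^{-1}\boldsymbol{x}\,r\in\mathbb{R}^d,\qquad \mathrm{IF}_{\mathrm{CE}}=-(\Sigma_X\otimes P)^{-1}\big(\boldsymbol{x}\otimes(\boldsymbol{\sigma}-\mathbf{e}_c)\big)\in\mathbb{R}^{dK},$$ and $R=\|\mathrm{IF}_{\mathrm{CE}}\|_2/\|\mathrm{IF}_{\mathrm{MSE}}\|_2$. Then $$\frac{\|\boldsymbol{\sigma}-\mathbf{e}_c\|_2}{\kappa_2(\Sigma_X)\,\lambda_{\max}(P)\,|r|}\;\le\; R\;\le\;\frac{\sqrt{2}\,\kappa_2(\Sigma_X)}{\lambda_{\min}(P)\,|r|},$$ where $\kappa_2(\Sigma_X)=\|\Sigma_X\|_2\|\Sigma_X^{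-1}\|_2=\lambda_{\max}(\Sigma_X)/\lambda_{\min}(\Sigma_X)$.
   Context: $\otimes$ denotes the Kronecker product and $\|\cdot\|_2$ the Euclidean norm for vectors and the spectral norm for matrices; $\lambda_{\min},\lambda_{\max}$ denote smallest and largest eigenvalues. Interpretation in the paper: $\Sigma_X=\mathbb{E}[\boldsymbol{x}\boldsymbol{x}^\top]$ is the feature covariance (the Hessian of the squared loss $\tfrac12(y-\boldsymbol{x}^\top\boldsymbol{\theta})^2$ in a linear regression model), $\mathrm{IF}_{\mathrm{MSE}}$ is the influence function of the least-squares estimator at the sample $(\boldsymbol{x},y)$; for a $K$-class softmax linear classifier with parameters $\boldsymbol{\beta}\in\mathbb{R}^{d\times K}$, $\boldsymbol{\sigma}=\mathrm{softmax}(\boldsymbol{x}^\top\boldsymbol{\beta})$, $P$ plays the role of the (expected) softmax covariance matrix $\mathrm{diag}(\boldsymbol{\sigma})-\boldsymbol{\sigma}\boldsymbol{\sigma}^\top$, the cross-entropy Hessian is taken to be $\Sigma_X\otimes P$, and $\mathrm{IF}_{\mathrm{CE}}$ is the cross-entropy influence function at the sample with true label $c$. *)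

theory Defs
  imports "HOL-Analysis.Analysis"
begin

definition spd :: "real^'n^'n \<Rightarrow> bool" where
  "spd A \<longleftrightarrow> transpose A = A \<and> (\<forall>v. v \<noteq> 0 \<longrightarrow> v \<bullet> (A *v v) > 0)"

definition eigvals :: "real^'n^'n \<Rightarrow> real set" where
  "eigvals A = {l. \<exists>v. v \<noteq> 0 \<and> A *v v = l *s v}"

definition lambda_max :: "real^'n^'n \<Rightarrow> real" where
  "lambda_max A = Max (eigvals A)"

definition lambda_min :: "real^'n^'n \<Rightarrow> real" where
  "lambda_min A = Min (eigvals A)"

definition spec_norm :: "real^'n^'m \<Rightarrow> real" where
  "spec_norm A = onorm (\<lambda>v. A *v v)"

definition kappa2 :: "real^'n^'n \<Rightarrow> real" where
  "kappa2 A = spec_norm A * spec_norm (matrix_inv A)"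

definition kron :: "real^'n^'n \<Rightarrow> real^'m^'m \<Rightarrow> real^('n \<times> 'm)^('n \<times> 'm)" where
  "kron A B = (\<chi> p q. A$(fst p)$(fst q) * B$(snd p)$(snd q))"

definition kronv :: "real^'n \<Rightarrow> real^'m \<Rightarrow> real^('n \<times> 'm)" where
  "kronv x y = (\<chi> p. x$(fst p) * y$(snd p))"

end

theory Submission
  imports Defs
begin

text \<open>By the mixed-product rule \<open>(\<Sigma>\<^sub>X \<otimes> P)\<^sup>-\<^sup>1 (x \<otimes> s) = \<Sigma>\<^sub>X\<^sup>-\<^sup>1 x \<otimes> P\<^sup>-\<^sup>1 s\<close>
  and multiplicativity of the norm on Kronecker products of vectors, the factor
  \<open>\<parallel>\<Sigma>\<^sub>X\<^sup>-\<^sup>1 x\<parallel>\<close> cancels and \<open>R = \<parallel>P\<^sup>-\<^sup>1 s\<parallel> / \<bar>r\<bar>\<close> with \<open>s = \<sigma> - e\<^sub>c\<close>.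
  The bounds then follow from \<open>\<lambda>\<^sub>m\<^sub>i\<^sub>n(P) \<parallel>w\<parallel> \<le> \<parallel>P w\<parallel> \<le> \<lambda>\<^sub>m\<^sub>a\<^sub>x(P) \<parallel>w\<parallel>\<close>,
  \<open>\<parallel>\<sigma> - e\<^sub>c\<parallel>\<^sup>2 \<le> 2\<close> and \<open>\<kappa>\<^sub>2 \<ge> 1\<close>.

  The spectral bounds are obtained variationally, without a spectral theorem: if \<open>\<parallel>P w\<parallel>\<close>
  is extremal on the unit sphere at \<open>v\<close>, the quadratic form \<open>\<parallel>P w\<parallel>\<^sup>2 - \<parallel>P v\<parallel>\<^sup>2 \<parallel>w\<parallel>\<^sup>2\<close>
  is semidefinite and vanishes at \<open>v\<close>, hence \<open>P\<^sup>2 v = \<parallel>P v\<parallel>\<^sup>2 v\<close>; then \<open>P v + \<parallel>P v\<parallel> v\<close>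
  is an eigenvector of \<open>P\<close> with eigenvalue \<open>\<parallel>P v\<parallel>\<close>.\<close>

lemma matrix_inv_inverse:
  fixes A :: "'a::semiring_1^'n^'m"
  assumes "invertible A"
  shows "A ** matrix_inv A = mat 1" "matrix_inv A ** A = mat 1"
  using someI_ex[OF assms[unfolded invertible_def]] by (simp_all add: matrix_inv_def)

lemma matrix_inv_unique:
  fixes A B :: "'a::field^'n^'n"
  assumes "B ** A = mat 1"
  shows "matrix_inv A = B"
proof -
  have "invertible A" using assms invertible_left_inverse by blast
  then have "B ** (A ** matrix_inv A) = B" by (simp add: matrix_inv_inverse)
  then show ?thesis by (simp add: assms matrix_mul_assoc)
qed

lemma inner_matrix_vector_symmetric:
  fixes A :: "real^'n^'n"
  assumes "transpose A = A"
  shows "x \<bullet> (A *v y) = y \<bullet> (A *v x)"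
  by (metis assms dot_lmul_matrix inner_commute transpose_matrix_vector)

lemma spd_invertible:
  fixes A :: "real^'n^'n"
  assumes "spd A"
  shows "invertible A"
proof -
  have "A *v v = 0 \<Longrightarrow> v = 0" for v
    using assms unfolding spd_def by (metis inner_zero_right less_irrefl)
  then show ?thesis
    using invertible_left_inverse matrix_left_invertible_ker by blast
qed

lemma sum_UNIV_prod_mult:
  fixes f :: "'n::finite \<Rightarrow> 'a::comm_semiring_0" and g :: "'m::finite \<Rightarrow> 'a"
  shows "(\<Sum>p\<in>UNIV. f (fst p) * g (snd p)) = (\<Sum>i\<in>UNIV. f i) * (\<Sum>j\<in>UNIV. g j)"
  by (simp add: sum_product sum.cartesian_product split_beta flip: UNIV_Times_UNIV)

lemma kron_mult:
  fixes A C :: "real^'n^'n" and B D :: "real^'m^'m"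
  shows "kron A B ** kron C D = kron (A ** C) (B ** D)"
proof -
  have "(\<Sum>p\<in>UNIV. A$i$(fst p) * B$k$(snd p) * (C$(fst p)$j * D$(snd p)$l))
      = (\<Sum>m\<in>UNIV. A$i$m * C$m$j) * (\<Sum>n\<in>UNIV. B$k$n * D$n$l)" for i j k l
    using sum_UNIV_prod_mult[of "\<lambda>m. A$i$m * C$m$j" "\<lambda>n. B$k$n * D$n$l"] by (simp add: mult_ac)
  then show ?thesis
    by (simp add: kron_def matrix_matrix_mult_def vec_eq_iff)
qed

lemma kron_mat_1: "kron (mat 1 :: real^'n^'n) (mat 1 :: real^'m^'m) = mat 1"
  by (auto simp: kron_def mat_def vec_eq_iff prod_eq_iff)

lemma kron_mult_kronv:
  fixes A :: "real^'n^'n" and B :: "real^'m^'m"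
  shows "kron A B *v kronv a b = kronv (A *v a) (B *v b)"
proof -
  have "(\<Sum>p\<in>UNIV. A$i$(fst p) * B$k$(snd p) * (a$(fst p) * b$(snd p)))
      = (\<Sum>m\<in>UNIV. A$i$m * a$m) * (\<Sum>n\<in>UNIV. B$k$n * b$n)" for i k
    using sum_UNIV_prod_mult[of "\<lambda>m. A$i$m * a$m" "\<lambda>n. B$k$n * b$n"] by (simp add: mult_ac)
  then show ?thesis
    by (simp add: kron_def kronv_def matrix_vector_mult_def vec_eq_iff)
qed

lemma norm_kronv: "norm (kronv a b) = norm a * norm b"
proof -
  have "kronv a b \<bullet> kronv a b = (a \<bullet> a) * (b \<bullet> b)"
    using sum_UNIV_prod_mult[of "\<lambda>m. a$m * a$m" "\<lambda>n. b$n * b$n"]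
    by (simp add: kronv_def inner_vec_def mult_ac)
  then show ?thesis by (simp add: norm_eq_sqrt_inner real_sqrt_mult)
qed

lemma matrix_inv_kron:
  fixes A :: "real^'n^'n" and B :: "real^'m^'m"
  assumes "invertible A" "invertible B"
  shows "matrix_inv (kron A B) = kron (matrix_inv A) (matrix_inv B)"
  by (rule matrix_inv_unique) (simp add: kron_mult kron_mat_1 matrix_inv_inverse assms)

lemma norm_diff_axis_le_sqrt2:
  fixes \<sigma> :: "real^'k"
  assumes nonneg: "\<forall>k. \<sigma> $ k \<ge> 0" and sum1: "(\<Sum>k\<in>UNIV. \<sigma> $ k) = 1"
  shows "norm (\<sigma> - axis c 1) \<le> sqrt 2"
proof -
  have "\<sigma> $ k ^ 2 \<le> \<sigma> $ k" for k
  proof -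
    have "\<sigma> $ k \<le> 1" using member_le_sum[of k UNIV "\<lambda>k. \<sigma> $ k"] nonneg sum1 by simp
    then show ?thesis using nonneg by (simp add: power2_eq_square mult_left_le)
  qed
  then have "norm \<sigma> ^ 2 \<le> (\<Sum>k\<in>UNIV. \<sigma> $ k)"
    by (simp add: power2_norm_eq_inner inner_vec_def sum_mono flip: power2_eq_square)
  then have "norm \<sigma> ^ 2 \<le> 1" using sum1 by simp
  then have "norm (\<sigma> - axis c 1) ^ 2 \<le> 2 - 2 * \<sigma> $ c"
    using dot_norm_neg[of \<sigma> "axis c 1"] by (simp add: inner_axis norm_axis_1)
  also have "\<dots> \<le> 2" using nonneg by simp
  finally show ?thesis by (simp add: real_le_rsqrt)
qed

lemma finite_eigvals_symmetric:
  fixes B :: "real^'n^'n"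
  assumes sym: "transpose B = B"
  shows "finite (eigvals B)"
proof -
  define f where "f l = (SOME v. v \<noteq> 0 \<and> B *v v = l *s v)" for l
  have f: "f l \<noteq> 0" "B *v f l = l *\<^sub>R f l" if "l \<in> eigvals B" for l
    using that someI_ex[of "\<lambda>v. v \<noteq> 0 \<and> B *v v = l *s v"]
    unfolding f_def eigvals_def by (auto simp: scalar_mult_eq_scaleR)
  have orth: "f l \<bullet> f l' = 0" if "l \<in> eigvals B" "l' \<in> eigvals B" "l \<noteq> l'" for l l'
  proof -
    have "l' * (f l \<bullet> f l') = l * (f l \<bullet> f l')"
      using inner_matrix_vector_symmetric[OF sym, of "f l" "f l'"] f that
      by (simp add: inner_commute)
    then show ?thesis using that(3) by simp
  qed
  have "inj_on f (eigvals B)"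
    by (rule inj_onI) (metis f(1) orth inner_eq_zero_iff)
  moreover have "independent (f ` eigvals B)"
    by (rule pairwise_orthogonal_independent)
      (use f(1) in \<open>auto simp: pairwise_def orthogonal_def intro!: orth\<close>)
  then have "finite (f ` eigvals B)" using independent_bound by blast
  ultimately show ?thesis using finite_image_iff by blast
qed

lemma eigvals_spd_pos:
  fixes B :: "real^'n^'n"
  assumes "spd B" "l \<in> eigvals B"
  shows "0 < l"
proof -
  obtain v where v: "v \<noteq> 0" "B *v v = l *s v" using assms(2) unfolding eigvals_def by blast
  have "0 < v \<bullet> (B *v v)" using assms(1) v(1) unfolding spd_def by blast
  then have "0 < l * (v \<bullet> v)" using v(2) by (simp add: scalar_mult_eq_scaleR)
  then show ?thesis using inner_ge_zero[of v] by (auto simp: zero_less_mult_iff)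
qed

lemma symmetric_psd_form_zero_imp_kernel:
  fixes C :: "real^'n^'n"
  assumes sym: "transpose C = C" and psd: "\<And>w. 0 \<le> w \<bullet> (C *v w)"
    and zero: "v \<bullet> (C *v v) = 0"
  shows "C *v v = 0"
proof -
  have "w \<bullet> (C *v v) = 0" for w
  proof -
    define f where "f t = (v + t *\<^sub>R w) \<bullet> (C *v (v + t *\<^sub>R w))" for t
    have "f = (\<lambda>t. 2 * t * (w \<bullet> (C *v v)) + t\<^sup>2 * (w \<bullet> (C *v w)))"
      using zero inner_matrix_vector_symmetric[OF sym, of v w]
      by (simp add: fun_eq_iff f_def algebra_simps inner_add power2_eq_square)
    then have der: "DERIV f 0 :> 2 * (w \<bullet> (C *v v))"
      by (auto intro!: derivative_eq_intros)
    have "f 0 \<le> f t" for t using psd zero by (simp add: f_def)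
    then have "2 * (w \<bullet> (C *v v)) = 0" using DERIV_local_min[OF der zero_less_one] by blast
    then show ?thesis by simp
  qed
  then show ?thesis by (metis inner_eq_zero_iff)
qed

lemma extremal_gain_imp_eigvec_square:
  fixes B :: "real^'n^'n"
  assumes sym: "transpose B = B" and unit: "norm v = 1"
    and extremal: "(\<forall>w. norm (B *v w) \<le> norm (B *v v) * norm w)
                 \<or> (\<forall>w. norm (B *v v) * norm w \<le> norm (B *v w))"
  shows "B *v (B *v v) = (norm (B *v v))\<^sup>2 *\<^sub>R v"
proof -
  define M where "M = norm (B *v v)"
  define C where "C = B ** B - M\<^sup>2 *\<^sub>R mat 1"
  have C_sym: "transpose C = C"
  proof -
    have "transpose (X - Y) = transpose X - transpose Y" for X Y :: "real^'n^'n"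
      by (simp add: transpose_def vec_eq_iff)
    then show ?thesis by (simp add: C_def matrix_transpose_mul transpose_scalar sym)
  qed
  have C_form: "w \<bullet> (C *v w) = (norm (B *v w))\<^sup>2 - M\<^sup>2 * (norm w)\<^sup>2" for w
    using inner_matrix_vector_symmetric[OF sym, of w "B *v w"]
    by (simp add: C_def matrix_vector_mult_diff_rdistrib matrix_vector_mul_assoc[symmetric]
        inner_diff_right power2_norm_eq_inner inner_commute flip: scaleR_matrix_vector_assoc)
  have C_v: "v \<bullet> (C *v v) = 0" using unit by (simp add: C_form M_def)
  have "C *v v = 0"
    using extremal[folded M_def]
  proof
    assume max: "\<forall>w. norm (B *v w) \<le> M * norm w"
    have neg: "- C *v w = - (C *v w)" for w
      by (simp add: matrix_vector_mult_def vec_eq_iff sum_negf)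
    have "transpose (- C) = - C"
      using C_sym by (simp add: transpose_def vec_eq_iff)
    moreover have "0 \<le> w \<bullet> (- C *v w)" for w
      using power_mono[OF max[rule_format, of w] norm_ge_zero]
      by (simp add: neg C_form power_mult_distrib)
    ultimately have "- C *v v = 0"
      using symmetric_psd_form_zero_imp_kernel[of "- C"] C_v by (simp add: neg)
    then show "C *v v = 0" by (simp add: neg)
  next
    assume min: "\<forall>w. M * norm w \<le> norm (B *v w)"
    have "0 \<le> w \<bullet> (C *v w)" for w
      using power_mono[OF min[rule_format, of w]] by (simp add: C_form M_def power_mult_distrib)
    then show "C *v v = 0" using symmetric_psd_form_zero_imp_kernel C_sym C_v by blast
  qed
  then show ?thesis
    by (simp add: C_def M_def matrix_vector_mult_diff_rdistrib matrix_vector_mul_assoc flip: scaleR_matrix_vector_assoc)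
qed

lemma spd_eigvec_square_imp_eigval:
  fixes B :: "real^'n^'n"
  assumes spd: "spd B" and "v \<noteq> 0" and sq: "B *v (B *v v) = M\<^sup>2 *\<^sub>R v" and "0 \<le> M"
  shows "M \<in> eigvals B"
proof -
  define u where "u = B *v v + M *\<^sub>R v"
  have Bu: "B *v u = M *\<^sub>R u"
    by (simp add: u_def sq matrix_vector_right_distrib matrix_vector_mult_scaleR
        power2_eq_square algebra_simps)
  have "u \<noteq> 0"
  proof
    assume "u = 0"
    then have "v \<bullet> (B *v v) = - M * (v \<bullet> v)"
      by (simp add: u_def eq_neg_iff_add_eq_0[symmetric])
    moreover have "0 < v \<bullet> (B *v v)" using spd \<open>v \<noteq> 0\<close> unfolding spd_def by blast
    ultimately show False
      using mult_nonneg_nonneg[OF \<open>0 \<le> M\<close> inner_ge_zero[of v]] by linarith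
  qed
  with Bu show ?thesis unfolding eigvals_def by (auto simp: scalar_mult_eq_scaleR)
qed

lemma norm_matrix_vector_normalize:
  fixes A :: "real^'n^'m"
  shows "norm (A *v w) = norm w * norm (A *v (w /\<^sub>R norm w))"
  by (cases "w = 0") (simp_all add: matrix_vector_mult_scaleR)

lemma spd_norm_mult_bounded_by_eigvals:
  fixes B :: "real^'n^'n"
  assumes spd: "spd B"
  obtains m M where "m \<in> eigvals B" "M \<in> eigvals B"
    "\<And>w. m * norm w \<le> norm (B *v w)" "\<And>w. norm (B *v w) \<le> M * norm w"
proof -
  let ?S = "sphere (0::real^'n) 1"
  have sym: "transpose B = B" using spd unfolding spd_def by blast
  have "axis undefined 1 \<in> ?S" by (simp add: norm_axis_1)
  then have "?S \<noteq> {}" by blast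
  moreover have "continuous_on ?S (\<lambda>w. norm (B *v w))"
    by (intro continuous_on_norm linear_continuous_on matrix_vector_mul_bounded_linear)
  ultimately obtain u v where uv: "u \<in> ?S" "v \<in> ?S"
    and extremal: "\<And>z. z \<in> ?S \<Longrightarrow> norm (B *v u) \<le> norm (B *v z) \<and> norm (B *v z) \<le> norm (B *v v)"
    using continuous_attains_inf[OF compact_sphere] continuous_attains_sup[OF compact_sphere]
    by metis
  have "norm (B *v u) * norm w \<le> norm (B *v w) \<and> norm (B *v w) \<le> norm (B *v v) * norm w" for w
    using extremal[of "w /\<^sub>R norm w"] norm_matrix_vector_normalize[of B w]
    by (cases "w = 0") (simp_all add: mult.commute)
  moreover have "norm (B *v z) \<in> eigvals B"
    if "z \<in> ?S" "(\<forall>w. norm (B *v w) \<le> norm (B *v z) * norm w)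
                 \<or> (\<forall>w. norm (B *v z) * norm w \<le> norm (B *v w))" for z
  proof (rule spd_eigvec_square_imp_eigval[OF spd])
    show "B *v (B *v z) = (norm (B *v z))\<^sup>2 *\<^sub>R z"
      using that by (intro extremal_gain_imp_eigvec_square[OF sym]) auto
  qed (use that in auto)
  ultimately show ?thesis using that uv by blast
qed

lemma spd_lambda_bounds:
  fixes B :: "real^'n^'n"
  assumes spd: "spd B"
  shows "0 < lambda_min B" "lambda_min B \<le> lambda_max B"
    and "lambda_min B * norm w \<le> norm (B *v w)" "norm (B *v w) \<le> lambda_max B * norm w"
proof -
  obtain m M where eig: "m \<in> eigvals B" "M \<in> eigvals B"
    and gain: "\<And>w. m * norm w \<le> norm (B *v w)" "\<And>w. norm (B *v w) \<le> M * norm w"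
    using spd_norm_mult_bounded_by_eigvals[OF spd] by blast
  have fin: "finite (eigvals B)"
    using spd finite_eigvals_symmetric unfolding spd_def by blast
  have min_in: "lambda_min B \<in> eigvals B"
    unfolding lambda_min_def using eig(1) fin by (auto intro: Min_in)
  show "0 < lambda_min B" using eigvals_spd_pos[OF spd min_in] .
  show "lambda_min B \<le> lambda_max B"
    unfolding lambda_max_def using fin min_in by simp
  show "lambda_min B * norm w \<le> norm (B *v w)"
    using Min_le[OF fin eig(1)] gain(1)[of w] mult_right_mono[of _ m "norm w"]
    unfolding lambda_min_def by (meson norm_ge_zero order_trans)
  show "norm (B *v w) \<le> lambda_max B * norm w"
    using Max_ge[OF fin eig(2)] gain(2)[of w] mult_right_mono[of M _ "norm w"]
    unfolding lambda_max_def by (meson norm_ge_zero order_trans)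
qed

lemma spd_norm_inverse_bounds:
  fixes P :: "real^'n^'n"
  assumes spd: "spd P"
  shows "norm s / lambda_max P \<le> norm (matrix_inv P *v s)"
    and "norm (matrix_inv P *v s) \<le> norm s / lambda_min P"
proof -
  have s: "P *v (matrix_inv P *v s) = s"
    by (simp add: matrix_vector_mul_assoc matrix_inv_inverse spd_invertible[OF spd])
  have pos: "0 < lambda_min P" "0 < lambda_max P"
    using spd_lambda_bounds(1,2)[OF spd] by linarith+
  show "norm s / lambda_max P \<le> norm (matrix_inv P *v s)"
    using spd_lambda_bounds(4)[OF spd, of "matrix_inv P *v s"] pos s
    by (simp add: divide_le_eq mult.commute)
  show "norm (matrix_inv P *v s) \<le> norm s / lambda_min P"
    using spd_lambda_bounds(3)[OF spd, of "matrix_inv P *v s"] pos s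
    by (simp add: le_divide_eq mult.commute)
qed

lemma kappa2_ge_1:
  fixes A :: "real^'n^'n"
  assumes "invertible A"
  shows "1 \<le> kappa2 A"
proof -
  have "(\<lambda>v. A *v v) \<circ> (\<lambda>v. matrix_inv A *v v) = (\<lambda>v. v)"
    using matrix_inv_inverse[OF assms] by (auto simp: matrix_vector_mul_assoc)
  then have "onorm (\<lambda>v::real^'n. v) \<le> spec_norm A * spec_norm (matrix_inv A)"
    unfolding spec_norm_def by (metis onorm_compose matrix_vector_mul_bounded_linear)
  then show ?thesis using onorm_id[where 'a="real^'n"] by (simp add: kappa2_def)
qed

lemma norm_influence_ratio:
  fixes SigmaX :: "real^'d^'d" and P :: "real^'k^'k"
  assumes "invertible SigmaX" "invertible P" "x \<noteq> 0"
  shows "norm (- (matrix_inv (kron SigmaX P) *v kronv x s)) / norm (matrix_inv SigmaX *v (r *s x))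
       = norm (matrix_inv P *v s) / \<bar>r\<bar>"
proof -
  have "SigmaX *v (matrix_inv SigmaX *v x) = x"
    by (simp add: matrix_vector_mul_assoc matrix_inv_inverse assms(1))
  then have "matrix_inv SigmaX *v x \<noteq> 0" using assms(3) by auto
  then show ?thesis
    by (simp add: matrix_inv_kron assms kron_mult_kronv norm_kronv scalar_mult_eq_scaleR
        matrix_vector_mult_scaleR)
qed

theorem mainTheorem1:
  fixes SigmaX :: "real^'d^'d" and P :: "real^'k^'k"
    and x theta :: "real^'d" and y :: real
    and sigma :: "real^'k" and c :: 'k
  assumes K2: "CARD('k) \<ge> 2"
    and SX: "spd SigmaX" and Ppd: "spd P"
    and xnz: "x \<noteq> 0"
    and rnz: "y - x \<bullet> theta \<noteq> 0"
    and sig_nonneg: "\<forall>k. sigma $ k \<ge> 0"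
    and sig_sum: "(\<Sum>k\<in>UNIV. sigma $ k) = 1"
    and sig_ne: "sigma \<noteq> axis c 1"
  shows
    "let r = y - x \<bullet> theta;
         IF_MSE = matrix_inv SigmaX *v (r *s x);
         IF_CE = - (matrix_inv (kron SigmaX P) *v kronv x (sigma - axis c 1));
         R = norm IF_CE / norm IF_MSE
     in norm (sigma - axis c 1) / (kappa2 SigmaX * lambda_max P * \<bar>r\<bar>) \<le> R
        \<and> R \<le> sqrt 2 * kappa2 SigmaX / (lambda_min P * \<bar>r\<bar>)"
proof -
  define r where "r = y - x \<bullet> theta"
  define s where "s = sigma - axis c 1"
  define N where "N = norm (matrix_inv P *v s)"
  define \<kappa> where "\<kappa> = kappa2 SigmaX"
  have ratio: "norm (- (matrix_inv (kron SigmaX P) *v kronv x s)) / norm (matrix_inv SigmaX *v (r *s x))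
      = N / \<bar>r\<bar>"
    unfolding N_def by (rule norm_influence_ratio[OF spd_invertible[OF SX] spd_invertible[OF Ppd] xnz])
  have r: "0 < \<bar>r\<bar>" using rnz by (simp add: r_def)
  have \<kappa>: "1 \<le> \<kappa>" unfolding \<kappa>_def using kappa2_ge_1[OF spd_invertible[OF SX]] .
  have pos: "0 < lambda_min P" "0 < lambda_max P"
    using spd_lambda_bounds(1,2)[OF Ppd] by linarith+
  have "norm s / (\<kappa> * lambda_max P * \<bar>r\<bar>) \<le> norm s / (lambda_max P * \<bar>r\<bar>)"
    using \<kappa> pos r by (intro divide_left_mono) (auto intro: mult_right_le_one_le)
  also have "\<dots> \<le> N / \<bar>r\<bar>"
    using spd_norm_inverse_bounds(1)[OF Ppd, of s] r
    by (simp add: N_def divide_right_mono flip: divide_divide_eq_left)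
  finally have lower: "norm s / (\<kappa> * lambda_max P * \<bar>r\<bar>) \<le> N / \<bar>r\<bar>" .
  have "N \<le> norm s / lambda_min P"
    unfolding N_def by (rule spd_norm_inverse_bounds(2)[OF Ppd])
  also have "\<dots> \<le> sqrt 2 / lambda_min P"
    using norm_diff_axis_le_sqrt2[OF sig_nonneg sig_sum] pos by (simp add: s_def divide_right_mono)
  also have "\<dots> \<le> sqrt 2 * \<kappa> / lambda_min P"
    using \<kappa> pos by (simp add: divide_right_mono)
  finally have upper: "N / \<bar>r\<bar> \<le> sqrt 2 * \<kappa> / (lambda_min P * \<bar>r\<bar>)"
    using r by (simp add: divide_right_mono flip: divide_divide_eq_left)
  show ?thesis
    unfolding Let_def r_def[symmetric] s_def[symmetric] \<kappa>_def[symmetric] ratio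
    using lower upper by blast
qed

end
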